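(* Let $d\ge 2$, let $\sigma_1,\dots,\sigma_d>0$ and $\Sigma=\operatorname{diag}(\sigma_1^2,\dots,\sigma_d^2)$, let $\nu>0$, let $P$ be a $d\times d$ permutation matrix, and let $X\in\mathbb{R}^d$. For $l\in\mathbb{R}^{d(d-1)/2}$ let $L=L(l)$ be the strictly lower-triangular $d\times d$ matrix whose strictly lower-triangular entries are the components of $l$, and set $$\Theta(l)=(I-PLP^\top)^\top\,\Sigma^{-1}\,(I-PLP^\top).$$ Define the marginal likelihood $$p(X\mid \Sigma,\nu,P)=\int_{\mathbb{R}^{d(d-1)/2}} \mathcal{N}\big(X;0,\Theta(l)^{-1}\big)\,\mathcal{N}\big(l;0,\nu^2 I\big)\,dl ,$$ where $\mathcal{N}(\cdot\,;0,C)$ denotes the centered Gaussian density with covariance $C$. Let $G$ be the $d\times d$ strictly lower-triangular matrix with all strictly lower-triangular entries equal to $1$, let $X^2$ denote the entrywise square of $X$, and let $D=\operatorname{diag}(PGP^\top X^2)$ (the diagonal matrix whose diagonal is the vector $PGP^\top X^2$). Suppose $D$ has exactly one zero diagonal entry, at index $i$ (this holds for almost every $X$). Let $\Sigma',D'\in\mathbb{R}^{(d-1)\times(d-1)}$ be obtained from $\Sigma,D$ by deleting the $i$th row and column, and let $S$ be the $d\times d$ diagonal matrix with $S_{jj}=\dfrac{\nu^2 D_{jj}}{\sigma_j^2(\sigma_j^2+\nu^2D_{jj})}$. Then $$\log p(X\mid\Sigma,\nu,P) = -\frac d2\log 2\pi-\sum_{j=1}^d\log\sigma_j-(d-1)\log\nu+\frac12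 X^\top(S-\Sigma^{-1})X-\frac12\log\det D'-\frac12\log\det\big(\Sigma'^{-1}+\nu^{-2}D'^{-1}\big).$$
   Context: This is the marginal likelihood of a single observation $X$ from a linear-Gaussian structural equation model $X=W^\top X+\epsilon$, $\epsilon\sim\mathcal{N}(0,\Sigma)$, with $W^\top=PLP^\top$ (a DAG adjacency matrix written via a permutation $P$ and strictly lower-triangular weight matrix $L$), after integrating out the edge weights $l$ under an isotropic Gaussian prior $\mathcal{N}(0,\nu^2 I)$. Note $\det(I-PLP^\top)=1$, so $\det\Theta(l)=\det\Sigma^{-1}$. *)

theory Defs
  imports "HOL-Probability.Probability"
          "Jordan_Normal_Form.Determinant"
          "Jordan_Normal_Form.Gauss_Jordan_Elimination"
begin

definition minv :: "real mat \<Rightarrow> real mat" where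
  "minv A = the (mat_inverse A)"

definition diagm :: "nat \<Rightarrow> (nat \<Rightarrow> real) \<Rightarrow> real mat" where
  "diagm n f = mat n n (\<lambda>(i,j). if i = j then f i else 0)"

definition is_perm_mat :: "nat \<Rightarrow> real mat \<Rightarrow> bool" where
  "is_perm_mat d P \<longleftrightarrow> (\<exists>\<pi>. \<pi> permutes {..<d} \<and>
      P = mat d d (\<lambda>(i,j). if i = \<pi> j then 1 else 0))"

text \<open>Index set of the strictly lower triangular entries of a d x d matrix;
  it has d(d-1)/2 elements, so functions on it are the vectors l.\<close>
definition lower_idx :: "nat \<Rightarrow> (nat \<times> nat) set" where
  "lower_idx d = {(j,k). k < j \<and> j < d}"

definition lower_mat :: "nat \<Rightarrow> (nat \<times> nat \<Rightarrow> real) \<Rightarrow> real mat" where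
  "lower_mat d l = mat d d (\<lambda>(j,k). if k < j then l (j,k) else 0)"

definition Theta :: "nat \<Rightarrow> real mat \<Rightarrow> real mat \<Rightarrow> (nat \<times> nat \<Rightarrow> real) \<Rightarrow> real mat" where
  "Theta d Sig P l =
     (let B = 1\<^sub>m d - P * lower_mat d l * transpose_mat P
      in transpose_mat B * minv Sig * B)"

definition gauss_density :: "nat \<Rightarrow> real mat \<Rightarrow> real vec \<Rightarrow> real" where
  "gauss_density n C x =
     (2 * pi) powr (- real n / 2) * det C powr (- 1 / 2) *
     exp (- (1 / 2) * (x \<bullet> (minv C *\<^sub>v x)))"

definition marg_lik :: "nat \<Rightarrow> real mat \<Rightarrow> real \<Rightarrow> real mat \<Rightarrow> real vec \<Rightarrow> real" where
  "marg_lik d Sig \<nu> P X =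
     (\<integral>l. gauss_density d (minv (Theta d Sig P l)) X *
          (\<Prod>p\<in>lower_idx d. normal_density 0 \<nu> (l p))
       \<partial>(PiM (lower_idx d) (\<lambda>_. lborel)))"

definition Gmat :: "nat \<Rightarrow> real mat" where
  "Gmat d = mat d d (\<lambda>(j,k). if k < j then 1 else 0)"

definition Dmat :: "nat \<Rightarrow> real mat \<Rightarrow> real vec \<Rightarrow> real mat" where
  "Dmat d P X = diagm d (\<lambda>j. ((P * Gmat d * transpose_mat P) *\<^sub>v
                               vec d (\<lambda>k. (X $ k)\<^sup>2)) $ j)"

end

theory Submission
  imports Defs
begin

(* Since Sigma is diagonal and I - P L P^T is the conjugate of the unit lower
   triangular matrix I - L by P, det Theta(l) = det Sigma^-1 and X^T Theta(l) X is a sum of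
   squares: N(X; 0, Theta(l)^-1) factors into univariate densities N(X_j; mu_j(l), sigma_j^2),
   where mu_j(l) only involves the row of L belonging to coordinate j.  After reordering the
   coordinates by the permutation, the integral over l splits into independent rows, and each
   weight integrated against its N(0, nu^2) prior is a Gaussian convolution that adds
   nu^2 X_m^2 to the variance.  Hence p(X | Sigma, nu, P) is the product of the densities
   N(X_j; 0, sigma_j^2 + nu^2 D_jj); taking logarithms, the single index with D_ii = 0 only
   contributes sigma_i, and the remaining terms regroup into the two determinants. *)

(* HOL-Algebra's group syntax would otherwise capture inv, used below for inverse permutations. *)
unbundle no m_inv_syntax

lemma diagm_carrier [simp]: "diagm n f \<in> carrier_mat n n"
  by (simp add: diagm_def)

lemma dim_diagm [simp]: "dim_row (diagm n f) = n" "dim_col (diagm n f) = n"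
  by (simp_all add: diagm_def)

lemma index_diagm [simp]: "i < n \<Longrightarrow> j < n \<Longrightarrow> diagm n f $$ (i,j) = (if i = j then f i else 0)"
  by (simp add: diagm_def)

lemma diagm_cong: "(\<And>j. j < n \<Longrightarrow> f j = g j) \<Longrightarrow> diagm n f = diagm n g"
  by (rule eq_matI) auto

lemma diagm_mult_diagm: "diagm n f * diagm n g = diagm n (\<lambda>i. f i * g i)"
  by (rule eq_matI) (auto simp: scalar_prod_def row_def col_def mult_delta_left mult_delta_right)

lemma diagm_add_smult_diagm: "diagm n f + c \<cdot>\<^sub>m diagm n g = diagm n (\<lambda>i. f i + c * g i)"
  by (rule eq_matI) auto

lemma diagm_minus_diagm: "diagm n f - diagm n g = diagm n (\<lambda>i. f i - g i)"
  by (rule eq_matI) auto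

lemma det_diagm: "det (diagm n f) = (\<Prod>i<n. f i)"
proof -
  have "det (diagm n f) = prod_list (diag_mat (diagm n f))"
    by (rule det_upper_triangular[of _ n]) auto
  then show ?thesis
    by (simp add: diag_mat_def prod.distinct_set_conv_list[symmetric] atLeast0LessThan)
qed

lemma mat_delete_diagm:
  "i < n \<Longrightarrow> mat_delete (diagm n f) i i = diagm (n - 1) (f \<circ> insert_index i)"
  by (rule eq_matI) (auto simp: mat_delete_def insert_index_def)

lemma scalar_prod_diagm_mult_vec:
  "x \<in> carrier_vec n \<Longrightarrow> x \<bullet> (diagm n f *\<^sub>v x) = (\<Sum>j<n. f j * (x $ j)\<^sup>2)"
  by (auto simp: scalar_prod_def mult_mat_vec_def row_def mult_delta_left mult_delta_right
      power2_eq_square atLeast0LessThan intro!: sum.cong)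

lemma minv_eqI:
  assumes A: "A \<in> carrier_mat n n" and B: "B \<in> carrier_mat n n"
    and AB: "A * B = 1\<^sub>m n" and BA: "B * A = 1\<^sub>m n"
  shows "minv A = B"
proof -
  have "A \<in> Units (ring_mat TYPE(real) n n)"
    using A B AB BA unfolding Units_def by (auto simp: ring_mat_def)
  then obtain B' where B': "mat_inverse A = Some B'"
    using mat_inverse(1)[OF A, where b=n] by (metis option.exhaust)
  with mat_inverse(2)[OF A] have B'A: "B' * A = 1\<^sub>m n" and "B' \<in> carrier_mat n n"
    by auto
  then have "B' = B' * (A * B)"
    using AB by simp
  also have "\<dots> = (B' * A) * B"
    using A B \<open>B' \<in> carrier_mat n n\<close> by (simp add: assoc_mult_mat[of _ n n _ n _ n])
  also have "\<dots> = B"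
    using B by (simp add: B'A)
  finally show ?thesis
    using B' unfolding minv_def by simp
qed

lemma minv_inverse:
  assumes A: "A \<in> carrier_mat n n" and "det A \<noteq> 0"
  shows "minv A \<in> carrier_mat n n" "A * minv A = 1\<^sub>m n" "minv A * A = 1\<^sub>m n"
proof -
  have "A \<in> Units (ring_mat TYPE(real) n n)"
    using det_non_zero_imp_unit[OF assms] .
  then obtain B where "mat_inverse A = Some B"
    using mat_inverse(1)[OF A, where b=n] by (metis option.exhaust)
  with mat_inverse(2)[OF A] show "minv A \<in> carrier_mat n n" "A * minv A = 1\<^sub>m n" "minv A * A = 1\<^sub>m n"
    unfolding minv_def by auto
qed

lemma minv_minv: "A \<in> carrier_mat n n \<Longrightarrow> det A \<noteq> 0 \<Longrightarrow> minv (minv A) = A"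
  using minv_inverse by (intro minv_eqI[of _ n]) auto

lemma det_minv:
  assumes A: "A \<in> carrier_mat n n" and "det A \<noteq> 0"
  shows "det (minv A) = 1 / det A"
proof -
  have "det A * det (minv A) = 1"
    using det_mult[OF A minv_inverse(1)[OF assms]] minv_inverse(2)[OF assms] by simp
  with assms show ?thesis by (simp add: field_simps)
qed

lemma minv_diagm: "(\<And>i. i < n \<Longrightarrow> f i \<noteq> 0) \<Longrightarrow> minv (diagm n f) = diagm n (\<lambda>i. 1 / f i)"
  by (rule minv_eqI[of _ n]) (auto simp: diagm_mult_diagm intro!: eq_matI)

definition perm_mat :: "nat \<Rightarrow> (nat \<Rightarrow> nat) \<Rightarrow> real mat" where
  "perm_mat d \<pi> = mat d d (\<lambda>(i,j). if i = \<pi> j then 1 else 0)"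

lemma perm_mat_carrier [simp]: "perm_mat d \<pi> \<in> carrier_mat d d"
  by (simp add: perm_mat_def)

lemma permutes_inv_lessThan:
  assumes "\<pi> permutes {..<d}" and "j < (d::nat)"
  shows "inv \<pi> j < d"
proof -
  have "inv \<pi> j \<in> {..<d} \<longleftrightarrow> j \<in> {..<d}"
    using permutes_inv[OF assms(1)] by (rule permutes_in_image)
  with assms(2) show ?thesis by simp
qed

lemma sum_if_permutes_eq:
  fixes d :: nat
  assumes "\<pi> permutes {..<d}" and "j < d"
  shows "(\<Sum>k<d. if j = \<pi> k then f k else (0::real)) = f (inv \<pi> j)"
proof -
  have "j = \<pi> k \<longleftrightarrow> k = inv \<pi> j" for k
    using permutes_inv_eq[OF assms(1), of j k] by auto
  then have "(\<Sum>k<d. if j = \<pi> k then f k else 0) = (\<Sum>k<d. if k = inv \<pi> j then f k else 0)"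
    by (simp only:)
  also have "\<dots> = f (inv \<pi> j)"
    using permutes_inv_lessThan[OF assms] by (simp add: sum.delta)
  finally show ?thesis .
qed

lemma perm_mat_mult_vec_index:
  assumes "\<pi> permutes {..<d}" and "v \<in> carrier_vec d" and "j < d"
  shows "(perm_mat d \<pi> *\<^sub>v v) $ j = v $ inv \<pi> j"
proof -
  have "(perm_mat d \<pi> *\<^sub>v v) $ j = (\<Sum>k<d. (if j = \<pi> k then 1 else 0) * v $ k)"
    using assms by (simp add: perm_mat_def mult_mat_vec_def scalar_prod_def row_def atLeast0LessThan)
  then show ?thesis
    by (simp add: mult_delta_left sum_if_permutes_eq[OF assms(1,3)])
qed

lemma transpose_perm_mat_mult_vec_index:
  assumes "\<pi> permutes {..<d}" and "v \<in> carrier_vec d" and "j < d"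
  shows "(transpose_mat (perm_mat d \<pi>) *\<^sub>v v) $ j = v $ \<pi> j"
proof -
  have "(transpose_mat (perm_mat d \<pi>) *\<^sub>v v) $ j = (\<Sum>k<d. (if k = \<pi> j then 1 else 0) * v $ k)"
    using assms by (simp add: perm_mat_def mult_mat_vec_def scalar_prod_def row_def col_def atLeast0LessThan)
  moreover have "\<pi> j < d"
    using assms permutes_in_image[OF assms(1)] by blast
  ultimately show ?thesis
    by (simp add: mult_delta_left sum.delta)
qed

lemma perm_mat_mult_transpose:
  assumes "\<pi> permutes {..<d}"
  shows "perm_mat d \<pi> * transpose_mat (perm_mat d \<pi>) = 1\<^sub>m d"
proof (rule eq_matI)
  fix i j assume "i < dim_row (1\<^sub>m d)" "j < dim_col (1\<^sub>m d)"
  then have ij: "i < d" "j < d" by auto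
  then have "(perm_mat d \<pi> * transpose_mat (perm_mat d \<pi>)) $$ (i,j)
      = (\<Sum>k<d. (if i = \<pi> k then 1 else 0) * (if j = \<pi> k then 1 else 0))"
    by (simp add: perm_mat_def scalar_prod_def row_def col_def atLeast0LessThan)
  also have "\<dots> = 1\<^sub>m d $$ (i,j)"
    using ij permutes_inverses(1)[OF assms] by (simp add: mult_delta_left sum_if_permutes_eq[OF assms])
  finally show "(perm_mat d \<pi> * transpose_mat (perm_mat d \<pi>)) $$ (i,j) = 1\<^sub>m d $$ (i,j)" .
qed (auto simp: perm_mat_def)

lemma det_conj_perm_mat:
  assumes "\<pi> permutes {..<d}" and A: "A \<in> carrier_mat d d"
  shows "det (perm_mat d \<pi> * A * transpose_mat (perm_mat d \<pi>)) = det A"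
proof -
  let ?P = "perm_mat d \<pi>"
  have PA: "?P * A \<in> carrier_mat d d"
    using A by (simp add: mult_carrier_mat[of _ d d])
  have "det (?P * A * transpose_mat ?P) = det A * (det ?P * det (transpose_mat ?P))"
    using A PA by (simp add: det_mult[of _ d])
  also have "det ?P * det (transpose_mat ?P) = 1"
    using det_mult[of ?P d "transpose_mat ?P"] perm_mat_mult_transpose[OF assms(1)] by simp
  finally show ?thesis by simp
qed

lemma one_minus_conj_perm_mat:
  assumes "\<pi> permutes {..<d}" and A: "A \<in> carrier_mat d d"
  shows "1\<^sub>m d - perm_mat d \<pi> * A * transpose_mat (perm_mat d \<pi>)
       = perm_mat d \<pi> * (1\<^sub>m d - A) * transpose_mat (perm_mat d \<pi>)"
proof -
  let ?P = "perm_mat d \<pi>"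
  have "?P * (1\<^sub>m d - A) = ?P * 1\<^sub>m d - ?P * A"
    using A by (intro mult_minus_distrib_mat[of _ d d]) auto
  then have "?P * (1\<^sub>m d - A) * transpose_mat ?P = (?P - ?P * A) * transpose_mat ?P"
    using right_mult_one_mat[OF perm_mat_carrier] by simp
  also have "\<dots> = ?P * transpose_mat ?P - ?P * A * transpose_mat ?P"
    using A by (intro minus_mult_distrib_mat[of _ d d _ _ d]) (auto simp: mult_carrier_mat[of _ d d])
  finally show ?thesis using perm_mat_mult_transpose[OF assms(1)] by simp
qed

lemma lower_mat_carrier [simp]: "lower_mat d l \<in> carrier_mat d d"
  by (simp add: lower_mat_def)

lemma one_minus_conj_lower_mat_carrier [simp]:
  "P \<in> carrier_mat d d \<Longrightarrow> 1\<^sub>m d - P * lower_mat d l * transpose_mat P \<in> carrier_mat d d"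
  by (intro minus_carrier_mat mult_carrier_mat[of _ d d] lower_mat_carrier) simp_all

lemma lower_mat_mult_vec_index:
  assumes "w \<in> carrier_vec d" and "k < d"
  shows "(lower_mat d l *\<^sub>v w) $ k = (\<Sum>m<k. l (k,m) * w $ m)"
proof -
  have "(lower_mat d l *\<^sub>v w) $ k = (\<Sum>m\<in>{..<d} \<inter> {m. m < k}. l (k,m) * w $ m)"
    using assms by (auto simp: lower_mat_def mult_mat_vec_def scalar_prod_def row_def
        atLeast0LessThan sum.inter_restrict mult_delta_left)
  also have "{..<d} \<inter> {m. m < k} = {..<k}"
    using assms(2) by auto
  finally show ?thesis .
qed

lemma det_one_minus_lower_mat: "det (1\<^sub>m d - lower_mat d l) = 1"
proof -
  have "det (1\<^sub>m d - lower_mat d l) = prod_list (diag_mat (1\<^sub>m d - lower_mat d l))"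
    by (rule det_lower_triangular[of d]) (auto simp: lower_mat_def)
  then show ?thesis
    by (simp add: diag_mat_def lower_mat_def prod.distinct_set_conv_list[symmetric] atLeast0LessThan)
qed

lemma conj_lower_mat_mult_vec_index:
  assumes \<pi>: "\<pi> permutes {..<d}" and v: "v \<in> carrier_vec d" and j: "j < d"
  shows "(perm_mat d \<pi> * lower_mat d l * transpose_mat (perm_mat d \<pi>) *\<^sub>v v) $ j
       = (\<Sum>m<inv \<pi> j. l (inv \<pi> j, m) * v $ \<pi> m)"
proof -
  let ?P = "perm_mat d \<pi>"
  have ij: "inv \<pi> j < d"
    using permutes_inv_lessThan[OF \<pi> j] .
  have Pv: "transpose_mat ?P *\<^sub>v v \<in> carrier_vec d"
    using v by (simp add: mult_mat_vec_carrier[of _ d d])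
  have LPv: "lower_mat d l *\<^sub>v (transpose_mat ?P *\<^sub>v v) \<in> carrier_vec d"
    using Pv by (simp add: mult_mat_vec_carrier[of _ d d])
  have "?P * lower_mat d l * transpose_mat ?P *\<^sub>v v = ?P * lower_mat d l *\<^sub>v (transpose_mat ?P *\<^sub>v v)"
    using v by (intro assoc_mult_mat_vec[of _ d d _ d]) (auto simp: mult_carrier_mat[of _ d d])
  also have "\<dots> = ?P *\<^sub>v (lower_mat d l *\<^sub>v (transpose_mat ?P *\<^sub>v v))"
    using Pv by (intro assoc_mult_mat_vec[of _ d d _ d]) auto
  finally have assoc: "?P * lower_mat d l * transpose_mat ?P *\<^sub>v v
      = ?P *\<^sub>v (lower_mat d l *\<^sub>v (transpose_mat ?P *\<^sub>v v))" .
  have "(?P *\<^sub>v (lower_mat d l *\<^sub>v (transpose_mat ?P *\<^sub>v v))) $ j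
      = (\<Sum>m<inv \<pi> j. l (inv \<pi> j, m) * (transpose_mat ?P *\<^sub>v v) $ m)"
    unfolding perm_mat_mult_vec_index[OF \<pi> LPv j] lower_mat_mult_vec_index[OF Pv ij] ..
  also have "\<dots> = (\<Sum>m<inv \<pi> j. l (inv \<pi> j, m) * v $ \<pi> m)"
    using ij by (intro sum.cong refl) (subst transpose_perm_mat_mult_vec_index[OF \<pi> v]; simp)
  finally show ?thesis
    unfolding assoc .
qed

lemma scalar_prod_transpose_conj_mult_vec:
  fixes B M :: "'a :: comm_semiring_0 mat"
  assumes B: "B \<in> carrier_mat n n" and M: "M \<in> carrier_mat n n" and x: "x \<in> carrier_vec n"
  shows "x \<bullet> (transpose_mat B * M * B *\<^sub>v x) = (B *\<^sub>v x) \<bullet> (M *\<^sub>v (B *\<^sub>v x))"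
proof -
  define y where "y = M *\<^sub>v (B *\<^sub>v x)"
  have y: "y \<in> carrier_vec n"
    using B M x by (simp add: y_def mult_mat_vec_carrier[of _ n n])
  have "transpose_mat B * M * B *\<^sub>v x = transpose_mat B * M *\<^sub>v (B *\<^sub>v x)"
    using B M x by (intro assoc_mult_mat_vec[of _ n n _ n]) (auto simp: mult_carrier_mat[of _ n n])
  also have "\<dots> = transpose_mat B *\<^sub>v y"
    unfolding y_def using B M x by (intro assoc_mult_mat_vec[of _ n n _ n]) auto
  finally have "x \<bullet> (transpose_mat B * M * B *\<^sub>v x) = x \<bullet> (transpose_mat B *\<^sub>v y)"
    by (rule arg_cong)
  also have "\<dots> = (transpose_mat B *\<^sub>v y) \<bullet> x"
    using B x y by (intro comm_scalar_prod[of _ n]) auto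
  also have "\<dots> = y \<bullet> (B *\<^sub>v x)"
    using B x y by (rule transpose_vec_mult_scalar)
  also have "\<dots> = (B *\<^sub>v x) \<bullet> y"
    using B x y by (intro comm_scalar_prod[of _ n]) auto
  finally show ?thesis unfolding y_def .
qed

lemma Theta_diagm:
  assumes "\<forall>j<d. \<sigma> j \<noteq> 0"
  shows "Theta d (diagm d (\<lambda>j. (\<sigma> j)\<^sup>2)) P l
       = transpose_mat (1\<^sub>m d - P * lower_mat d l * transpose_mat P) * diagm d (\<lambda>j. 1 / (\<sigma> j)\<^sup>2)
         * (1\<^sub>m d - P * lower_mat d l * transpose_mat P)"
  using assms by (simp add: Theta_def Let_def minv_diagm)

lemma Theta_diagm_carrier:
  assumes "\<forall>j<d. \<sigma> j \<noteq> 0" and "P \<in> carrier_mat d d"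
  shows "Theta d (diagm d (\<lambda>j. (\<sigma> j)\<^sup>2)) P l \<in> carrier_mat d d"
  unfolding Theta_diagm[OF assms(1)]
  by (intro mult_carrier_mat[of _ d d]) (simp_all add: assms(2))

lemma det_Theta_diagm_perm_mat:
  assumes \<pi>: "\<pi> permutes {..<d}" and \<sigma>: "\<forall>j<d. \<sigma> j \<noteq> 0"
  shows "det (Theta d (diagm d (\<lambda>j. (\<sigma> j)\<^sup>2)) (perm_mat d \<pi>) l) = (\<Prod>j<d. 1 / (\<sigma> j)\<^sup>2)"
proof -
  define B where "B = 1\<^sub>m d - perm_mat d \<pi> * lower_mat d l * transpose_mat (perm_mat d \<pi>)"
  have B: "B \<in> carrier_mat d d"
    by (simp add: B_def)
  have "det B = 1"
    unfolding B_def one_minus_conj_perm_mat[OF \<pi> lower_mat_carrier]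
    by (simp add: det_conj_perm_mat[OF \<pi> minus_carrier_mat[OF lower_mat_carrier]] det_one_minus_lower_mat)
  with B have "det (transpose_mat B * diagm d (\<lambda>j. 1 / (\<sigma> j)\<^sup>2) * B) = det (diagm d (\<lambda>j. 1 / (\<sigma> j)\<^sup>2))"
    by (simp add: det_mult[of _ d] det_transpose mult_carrier_mat[of _ d d])
  then show ?thesis
    using \<sigma> by (simp add: Theta_diagm det_diagm B_def)
qed

lemma quadratic_form_Theta_diagm_perm_mat:
  assumes \<pi>: "\<pi> permutes {..<d}" and \<sigma>: "\<forall>j<d. \<sigma> j \<noteq> 0" and X: "X \<in> carrier_vec d"
  shows "X \<bullet> (Theta d (diagm d (\<lambda>j. (\<sigma> j)\<^sup>2)) (perm_mat d \<pi>) l *\<^sub>v X)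
       = (\<Sum>j<d. (X $ j - (\<Sum>m<inv \<pi> j. l (inv \<pi> j, m) * X $ \<pi> m))\<^sup>2 / (\<sigma> j)\<^sup>2)"
proof -
  define M where "M = perm_mat d \<pi> * lower_mat d l * transpose_mat (perm_mat d \<pi>)"
  have M: "M \<in> carrier_mat d d"
    by (simp add: M_def mult_carrier_mat[of _ d d])
  have BM: "1\<^sub>m d - M \<in> carrier_mat d d"
    using M by (rule minus_carrier_mat)
  have MX: "M *\<^sub>v X \<in> carrier_vec d"
    using M X by (rule mult_mat_vec_carrier)
  have "(1\<^sub>m d - M) *\<^sub>v X = 1\<^sub>m d *\<^sub>v X - M *\<^sub>v X"
    using M X by (intro minus_mult_distrib_mat_vec) auto
  then have "(1\<^sub>m d - M) *\<^sub>v X = X - M *\<^sub>v X"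
    unfolding one_mult_mat_vec[OF X] .
  then have BX: "((1\<^sub>m d - M) *\<^sub>v X) $ j = X $ j - (\<Sum>m<inv \<pi> j. l (inv \<pi> j, m) * X $ \<pi> m)"
    if "j < d" for j
    using that MX unfolding M_def conj_lower_mat_mult_vec_index[OF \<pi> X that, symmetric]
    by (simp only: index_minus_vec carrier_vecD)
  have "X \<bullet> (Theta d (diagm d (\<lambda>j. (\<sigma> j)\<^sup>2)) (perm_mat d \<pi>) l *\<^sub>v X)
      = ((1\<^sub>m d - M) *\<^sub>v X) \<bullet> (diagm d (\<lambda>j. 1 / (\<sigma> j)\<^sup>2) *\<^sub>v ((1\<^sub>m d - M) *\<^sub>v X))"
    unfolding Theta_diagm[OF \<sigma>] M_def[symmetric]
    using M X by (intro scalar_prod_transpose_conj_mult_vec) auto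
  also have "\<dots> = (\<Sum>j<d. 1 / (\<sigma> j)\<^sup>2 * (((1\<^sub>m d - M) *\<^sub>v X) $ j)\<^sup>2)"
    using BM X by (intro scalar_prod_diagm_mult_vec mult_mat_vec_carrier)
  also have "\<dots> = (\<Sum>j<d. (X $ j - (\<Sum>m<inv \<pi> j. l (inv \<pi> j, m) * X $ \<pi> m))\<^sup>2 / (\<sigma> j)\<^sup>2)"
    by (intro sum.cong) (simp_all add: BX)
  finally show ?thesis .
qed

lemma normal_density_powr:
  assumes "s > 0"
  shows "normal_density \<mu> s x = (2 * pi) powr (-1/2) * (s\<^sup>2) powr (-1/2) * exp (- (1/2) * ((x - \<mu>)\<^sup>2 / s\<^sup>2))"
proof -
  have "(2 * pi) powr (-1/2) * (s\<^sup>2) powr (-1/2) = 1 / (2 * pi * s\<^sup>2) powr (1/2)"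
    by (simp add: powr_mult[symmetric] powr_minus_divide[symmetric])
  also have "\<dots> = 1 / sqrt (2 * pi * s\<^sup>2)"
    using assms by (simp add: powr_half_sqrt)
  finally show ?thesis
    by (simp add: normal_density_def)
qed

lemma gauss_density_eq_prod_normal_density:
  assumes \<sigma>: "\<forall>j<d. \<sigma> j > 0" and X: "X \<in> carrier_vec d"
    and C: "C \<in> carrier_mat d d" and det_C: "det C = (\<Prod>j<d. 1 / (\<sigma> j)\<^sup>2)"
    and quad: "X \<bullet> (C *\<^sub>v X) = (\<Sum>j<d. (X $ j - \<mu> j)\<^sup>2 / (\<sigma> j)\<^sup>2)"
  shows "gauss_density d (minv C) X = (\<Prod>j<d. normal_density (\<mu> j) (\<sigma> j) (X $ j))"
proof -
  have "det C \<noteq> 0"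
    unfolding det_C using \<sigma> by (simp add: less_imp_neq[symmetric])
  then have "minv (minv C) = C" and det_minv_C: "det (minv C) = (\<Prod>j<d. (\<sigma> j)\<^sup>2)"
    using C by (simp_all add: minv_minv det_minv det_C prod_dividef)
  moreover have "(2 * pi) powr (- real d / 2) = (\<Prod>j<d. (2 * pi) powr (-1/2))"
    by (simp add: powr_power)
  moreover have "(\<Prod>j<d. (\<sigma> j)\<^sup>2) powr (-1/2) = (\<Prod>j<d. ((\<sigma> j)\<^sup>2) powr (-1/2))"
    by (rule prod_powr_distrib)
  moreover have "exp (- (1/2) * (\<Sum>j<d. (X $ j - \<mu> j)\<^sup>2 / (\<sigma> j)\<^sup>2))
      = (\<Prod>j<d. exp (- (1/2) * ((X $ j - \<mu> j)\<^sup>2 / (\<sigma> j)\<^sup>2)))"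
    by (simp add: sum_distrib_left exp_sum)
  ultimately have "gauss_density d (minv C) X = (\<Prod>j<d. (2 * pi) powr (-1/2) * ((\<sigma> j)\<^sup>2) powr (-1/2)
      * exp (- (1/2) * ((X $ j - \<mu> j)\<^sup>2 / (\<sigma> j)\<^sup>2)))"
    by (simp add: gauss_density_def quad prod.distrib)
  also have "\<dots> = (\<Prod>j<d. normal_density (\<mu> j) (\<sigma> j) (X $ j))"
    using \<sigma> by (intro prod.cong refl normal_density_powr[symmetric]) auto
  finally show ?thesis .
qed

lemma gauss_density_Theta_diagm_perm_mat:
  assumes \<pi>: "\<pi> permutes {..<d}" and \<sigma>: "\<forall>j<d. \<sigma> j > 0" and X: "X \<in> carrier_vec d"
  shows "gauss_density d (minv (Theta d (diagm d (\<lambda>j. (\<sigma> j)\<^sup>2)) (perm_mat d \<pi>) l)) X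
       = (\<Prod>j<d. normal_density (\<Sum>m<inv \<pi> j. l (inv \<pi> j, m) * X $ \<pi> m) (\<sigma> j) (X $ j))"
proof -
  have \<sigma>': "\<forall>j<d. \<sigma> j \<noteq> 0"
    using \<sigma> by (simp add: less_imp_neq[symmetric])
  show ?thesis
    using \<sigma> X by (intro gauss_density_eq_prod_normal_density Theta_diagm_carrier[OF \<sigma>']
        det_Theta_diagm_perm_mat[OF \<pi> \<sigma>'] quadratic_form_Theta_diagm_perm_mat[OF \<pi> \<sigma>' X]) auto
qed

lemma gaussian_exponent_complete_square:
  fixes y a t V W :: real
  assumes V: "V > 0" and W: "W > 0"
  defines "S \<equiv> V + a\<^sup>2 * W"
  shows "- (y - a * t)\<^sup>2 / (2 * V) + - t\<^sup>2 / (2 * W)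
       = - y\<^sup>2 / (2 * S) + - (t - a * W * y / S)\<^sup>2 / (2 * (V * W / S))"
proof -
  have S: "S > 0"
    using V W by (simp add: S_def add_pos_nonneg)
  have key: "W * S * (y - a * t)\<^sup>2 + V * S * t\<^sup>2 = V * W * y\<^sup>2 + (S * t - a * W * y)\<^sup>2"
    unfolding S_def by (simp add: power2_eq_square algebra_simps)
  have lhs: "- (y - a * t)\<^sup>2 / (2 * V) + - t\<^sup>2 / (2 * W)
      = - (W * S * (y - a * t)\<^sup>2 + V * S * t\<^sup>2) / (2 * V * W * S)"
    using V W S by (simp add: field_simps)
  have "t - a * W * y / S = (S * t - a * W * y) / S"
    using S by (simp add: field_simps)
  then have rhs: "- y\<^sup>2 / (2 * S) + - (t - a * W * y / S)\<^sup>2 / (2 * (V * W / S))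
      = - (V * W * y\<^sup>2 + (S * t - a * W * y)\<^sup>2) / (2 * V * W * S)"
    using V W S by (simp add: field_simps power2_eq_square)
  show ?thesis
    unfolding lhs rhs key ..
qed

lemma normal_density_affine_mult_normal_density:
  fixes s \<nu> a c t x :: real
  assumes s: "s > 0" and \<nu>: "\<nu> > 0"
  defines "S \<equiv> s\<^sup>2 + a\<^sup>2 * \<nu>\<^sup>2"
  shows "normal_density (c + a * t) s x * normal_density 0 \<nu> t
       = normal_density c (sqrt S) x * normal_density (a * \<nu>\<^sup>2 * (x - c) / S) (sqrt (s\<^sup>2 * \<nu>\<^sup>2 / S)) t"
proof -
  define V W where "V = s\<^sup>2" and "W = \<nu>\<^sup>2"
  have V: "V > 0" and W: "W > 0" and S: "S > 0"
    using s \<nu> by (simp_all add: V_def W_def S_def add_pos_nonneg)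
  have S_eq: "S = V + a\<^sup>2 * W"
    by (simp add: S_def V_def W_def)
  have "sqrt (2 * pi * V) * sqrt (2 * pi * W) = sqrt ((2 * pi * V) * (2 * pi * W))"
    by (rule real_sqrt_mult[symmetric])
  also have "(2 * pi * V) * (2 * pi * W) = (2 * pi * S) * (2 * pi * (V * W / S))"
    using S by (simp add: field_simps)
  also have "sqrt \<dots> = sqrt (2 * pi * S) * sqrt (2 * pi * (V * W / S))"
    by (rule real_sqrt_mult)
  finally have prefactor: "1 / sqrt (2 * pi * V) * (1 / sqrt (2 * pi * W))
      = 1 / sqrt (2 * pi * S) * (1 / sqrt (2 * pi * (V * W / S)))"
    by (simp only: times_divide_times_eq)
  have "normal_density (c + a * t) s x * normal_density 0 \<nu> t
      = 1 / sqrt (2 * pi * V) * (1 / sqrt (2 * pi * W))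
        * exp (- ((x - c) - a * t)\<^sup>2 / (2 * V) + - t\<^sup>2 / (2 * W))"
    unfolding normal_density_def V_def W_def exp_add by (simp add: algebra_simps)
  also have "\<dots> = 1 / sqrt (2 * pi * S) * (1 / sqrt (2 * pi * (V * W / S)))
        * exp (- (x - c)\<^sup>2 / (2 * S) + - (t - a * W * (x - c) / S)\<^sup>2 / (2 * (V * W / S)))"
    unfolding prefactor S_eq gaussian_exponent_complete_square[OF V W] ..
  also have "\<dots> = normal_density c (sqrt S) x * normal_density (a * W * (x - c) / S) (sqrt (V * W / S)) t"
    using S V W unfolding normal_density_def exp_add by (simp add: mult_ac)
  finally show ?thesis
    by (simp add: V_def W_def)
qed

lemma nn_integral_normal_density_affine_mean:
  fixes s \<nu> :: real
  assumes s: "s > 0" and \<nu>: "\<nu> > 0"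
  shows "(\<integral>\<^sup>+t. ennreal (normal_density (c + a * t) s x * normal_density 0 \<nu> t) \<partial>lborel)
       = ennreal (normal_density c (sqrt (s\<^sup>2 + a\<^sup>2 * \<nu>\<^sup>2)) x)"
proof -
  let ?S = "s\<^sup>2 + a\<^sup>2 * \<nu>\<^sup>2"
  let ?m = "a * \<nu>\<^sup>2 * (x - c) / ?S" and ?\<tau> = "sqrt (s\<^sup>2 * \<nu>\<^sup>2 / ?S)"
  have "?\<tau> > 0"
    using s \<nu> by (simp add: add_pos_nonneg)
  then have one: "(\<integral>\<^sup>+t. ennreal (normal_density ?m ?\<tau> t) \<partial>lborel) = 1"
    by (subst nn_integral_eq_integral) (auto intro!: integrable_normal_density integral_normal_density)
  have "(\<integral>\<^sup>+t. ennreal (normal_density (c + a * t) s x * normal_density 0 \<nu> t) \<partial>lborel)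
      = (\<integral>\<^sup>+t. ennreal (normal_density c (sqrt ?S) x) * ennreal (normal_density ?m ?\<tau> t) \<partial>lborel)"
    by (intro nn_integral_cong)
      (simp add: normal_density_affine_mult_normal_density[OF s \<nu>] ennreal_mult')
  also have "\<dots> = ennreal (normal_density c (sqrt ?S) x)"
    by (simp add: nn_integral_cmult one)
  finally show ?thesis .
qed

lemma product_sigma_finite_lborel: "product_sigma_finite (\<lambda>_. lborel)"
  unfolding product_sigma_finite_def by (auto intro: sigma_finite_lborel)

definition row_idx :: "nat \<Rightarrow> nat \<Rightarrow> (nat \<times> nat) set" where
  "row_idx r q = Pair r ` {..<q}"

lemma row_idx_Suc: "row_idx r (Suc q) = insert (r,q) (row_idx r q)"
  by (auto simp: row_idx_def lessThan_Suc)

lemma finite_row_idx [simp]: "finite (row_idx r q)"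
  by (simp add: row_idx_def)

lemma mem_row_idx [simp]: "(r',m) \<in> row_idx r q \<longleftrightarrow> r' = r \<and> m < q"
  by (auto simp: row_idx_def)

lemma prod_row_idx: "(\<Prod>p\<in>row_idx r q. g p) = (\<Prod>m<q. g (r,m))"
  unfolding row_idx_def by (subst prod.reindex) (auto simp: inj_on_def)

lemma measurable_component_lborel:
  "i \<in> I \<Longrightarrow> (\<lambda>y. y i) \<in> borel_measurable (PiM I (\<lambda>_. lborel))"
  using measurable_component_singleton[of i I "\<lambda>_. lborel"] by (simp add: measurable_lborel1)

lemma borel_measurable_normal_density:
  "f \<in> borel_measurable M \<Longrightarrow> g \<in> borel_measurable M \<Longrightarrow> (\<lambda>y. normal_density (f y) s (g y)) \<in> borel_measurable M"
  unfolding normal_density_def by measurable simp_all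

lemma borel_measurable_ennreal_compose:
  "f \<in> borel_measurable M \<Longrightarrow> (\<lambda>y. ennreal (f y)) \<in> borel_measurable M"
  by measurable

lemmas borel_measurable_density_rules = borel_measurable_ennreal_compose borel_measurable_times
  borel_measurable_add borel_measurable_sum borel_measurable_prod borel_measurable_normal_density
  measurable_component_lborel borel_measurable_const

lemma nn_integral_row:
  assumes \<nu>: "\<nu> > 0" and s: "s > 0"
  shows "(\<integral>\<^sup>+y. ennreal (normal_density (c + (\<Sum>m<q. y (r,m) * a m)) s x * (\<Prod>m<q. normal_density 0 \<nu> (y (r,m))))
          \<partial>PiM (row_idx r q) (\<lambda>_. lborel))
       = ennreal (normal_density c (sqrt (s\<^sup>2 + \<nu>\<^sup>2 * (\<Sum>m<q. (a m)\<^sup>2))) x)"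
  using s
proof (induction q arbitrary: s)
  case 0
  then show ?case
    by (simp add: row_idx_def space_PiM_empty)
next
  case (Suc q)
  define s' where "s' = sqrt (s\<^sup>2 + (a q)\<^sup>2 * \<nu>\<^sup>2)"
  have s': "s' > 0"
    using Suc.prems by (simp add: s'_def add_pos_nonneg)
  let ?f = "\<lambda>y. ennreal (normal_density (c + (\<Sum>m<Suc q. y (r,m) * a m)) s x
                         * (\<Prod>m<Suc q. normal_density 0 \<nu> (y (r,m))))"
  have meas: "?f \<in> borel_measurable (PiM (insert (r,q) (row_idx r q)) (\<lambda>_. lborel))"
    by (auto intro!: borel_measurable_density_rules)
  have "(\<integral>\<^sup>+y. ?f y \<partial>PiM (row_idx r (Suc q)) (\<lambda>_. lborel))
      = (\<integral>\<^sup>+y. \<integral>\<^sup>+t. ?f (y((r,q) := t)) \<partial>lborel \<partial>PiM (row_idx r q) (\<lambda>_. lborel))"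
    unfolding row_idx_Suc
    by (rule product_sigma_finite.product_nn_integral_insert[OF product_sigma_finite_lborel])
      (use meas in auto)
  also have "\<dots> = (\<integral>\<^sup>+y. ennreal (normal_density (c + (\<Sum>m<q. y (r,m) * a m)) s' x
                               * (\<Prod>m<q. normal_density 0 \<nu> (y (r,m)))) \<partial>PiM (row_idx r q) (\<lambda>_. lborel))"
  proof (rule nn_integral_cong)
    fix y :: "nat \<times> nat \<Rightarrow> real"
    let ?C = "c + (\<Sum>m<q. y (r,m) * a m)" and ?P = "\<Prod>m<q. normal_density 0 \<nu> (y (r,m))"
    have P: "?P \<ge> 0"
      by (simp add: prod_nonneg)
    have "?f (y((r,q) := t)) = ennreal ?P * ennreal (normal_density (?C + a q * t) s x * normal_density 0 \<nu> t)"
      for t using P by (simp add: ennreal_mult'[symmetric] algebra_simps)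
    moreover have "(\<lambda>t. ennreal (normal_density (?C + a q * t) s x * normal_density 0 \<nu> t))
        \<in> borel_measurable lborel"
      unfolding normal_density_def by measurable
    ultimately have "(\<integral>\<^sup>+t. ?f (y((r,q) := t)) \<partial>lborel)
        = ennreal ?P * (\<integral>\<^sup>+t. ennreal (normal_density (?C + a q * t) s x * normal_density 0 \<nu> t) \<partial>lborel)"
      by (simp add: nn_integral_cmult)
    also have "\<dots> = ennreal ?P * ennreal (normal_density ?C s' x)"
      unfolding nn_integral_normal_density_affine_mean[OF Suc.prems \<nu>] s'_def by (simp add: mult.commute)
    also have "\<dots> = ennreal (normal_density ?C s' x * ?P)"
      using P by (simp add: ennreal_mult'[symmetric] mult.commute)
    finally show "(\<integral>\<^sup>+t. ?f (y((r,q) := t)) \<partial>lborel) = ennreal (normal_density ?C s' x * ?P)" .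
  qed
  also have "\<dots> = ennreal (normal_density c (sqrt (s'\<^sup>2 + \<nu>\<^sup>2 * (\<Sum>m<q. (a m)\<^sup>2))) x)"
    by (rule Suc.IH[OF s'])
  also have "s'\<^sup>2 + \<nu>\<^sup>2 * (\<Sum>m<q. (a m)\<^sup>2) = s\<^sup>2 + \<nu>\<^sup>2 * (\<Sum>m<Suc q. (a m)\<^sup>2)"
    by (simp add: s'_def add_pos_nonneg algebra_simps)
  finally show ?case .
qed

(* The integrand of marg_lik with the coordinates renumbered along the permutation, Y = X o pi:
   the weights l (k, m) of row k only enter the k-th factor. *)
definition sem_joint_density ::
    "nat \<Rightarrow> (nat \<Rightarrow> real) \<Rightarrow> (nat \<Rightarrow> real) \<Rightarrow> real \<Rightarrow> (nat \<times> nat \<Rightarrow> real) \<Rightarrow> real" where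
  "sem_joint_density n Y s \<nu> l =
     (\<Prod>k<n. normal_density (\<Sum>m<k. l (k,m) * Y m) (s k) (Y k)) * (\<Prod>p\<in>lower_idx n. normal_density 0 \<nu> (l p))"

lemma sem_joint_density_nonneg: "sem_joint_density n Y s \<nu> l \<ge> 0"
  by (simp add: sem_joint_density_def prod_nonneg)

lemma mem_lower_idx [simp]: "(k,m) \<in> lower_idx n \<longleftrightarrow> m < k \<and> k < n"
  by (simp add: lower_idx_def)

lemma finite_lower_idx [simp]: "finite (lower_idx n)"
  by (rule finite_subset[of _ "{..<n} \<times> {..<n}"]) (auto simp: lower_idx_def)

lemma lower_idx_Suc: "lower_idx (Suc n) = lower_idx n \<union> row_idx n n"
  by (auto simp: lower_idx_def row_idx_def less_Suc_eq)

lemma lower_idx_row_idx_disjoint: "lower_idx n \<inter> row_idx n n = {}"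
  by (auto simp: lower_idx_def row_idx_def)

lemma borel_measurable_sem_joint_density:
  "lower_idx n \<subseteq> I \<Longrightarrow> sem_joint_density n Y s \<nu> \<in> borel_measurable (PiM I (\<lambda>_. lborel))"
  unfolding sem_joint_density_def by (auto intro!: borel_measurable_density_rules)

lemma sem_joint_density_Suc_merge:
  "sem_joint_density (Suc n) Y s \<nu> (merge (lower_idx n) (row_idx n n) (x, y))
     = sem_joint_density n Y s \<nu> x
       * (normal_density (\<Sum>m<n. y (n,m) * Y m) (s n) (Y n) * (\<Prod>m<n. normal_density 0 \<nu> (y (n,m))))"
proof -
  let ?z = "merge (lower_idx n) (row_idx n n) (x, y)"
  have zx: "?z p = x p" if "p \<in> lower_idx n" for p
    using that by (simp add: merge_def)
  have zy: "?z p = y p" if "p \<in> row_idx n n" for p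
    using that lower_idx_row_idx_disjoint by (auto simp: merge_def)
  have "(\<Prod>k<Suc n. normal_density (\<Sum>m<k. ?z (k,m) * Y m) (s k) (Y k))
      = (\<Prod>k<n. normal_density (\<Sum>m<k. x (k,m) * Y m) (s k) (Y k))
        * normal_density (\<Sum>m<n. y (n,m) * Y m) (s n) (Y n)"
    by (simp add: zx zy)
  moreover have "(\<Prod>p\<in>lower_idx (Suc n). normal_density 0 \<nu> (?z p))
      = (\<Prod>p\<in>lower_idx n. normal_density 0 \<nu> (x p)) * (\<Prod>m<n. normal_density 0 \<nu> (y (n,m)))"
    unfolding lower_idx_Suc
    by (subst prod.union_disjoint) (auto simp: lower_idx_row_idx_disjoint zx zy prod_row_idx intro!: prod.cong)
  ultimately show ?thesis
    by (simp add: sem_joint_density_def mult_ac)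
qed

lemma nn_integral_sem_joint_density:
  assumes \<nu>: "\<nu> > 0" and s: "\<And>k. s k > 0"
  shows "(\<integral>\<^sup>+l. ennreal (sem_joint_density n Y s \<nu> l) \<partial>PiM (lower_idx n) (\<lambda>_. lborel))
       = ennreal (\<Prod>k<n. normal_density 0 (sqrt ((s k)\<^sup>2 + \<nu>\<^sup>2 * (\<Sum>m<k. (Y m)\<^sup>2))) (Y k))"
proof (induction n)
  case 0
  then show ?case
    by (simp add: sem_joint_density_def lower_idx_def space_PiM_empty)
next
  case (Suc n)
  let ?G = "\<lambda>y. normal_density (\<Sum>m<n. y (n,m) * Y m) (s n) (Y n) * (\<Prod>m<n. normal_density 0 \<nu> (y (n,m)))"
  let ?R = "normal_density 0 (sqrt ((s n)\<^sup>2 + \<nu>\<^sup>2 * (\<Sum>m<n. (Y m)\<^sup>2))) (Y n)"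
  let ?M = "\<lambda>I. PiM I (\<lambda>_. lborel :: real measure)"
  have G: "(\<integral>\<^sup>+y. ennreal (?G y) \<partial>?M (row_idx n n)) = ennreal ?R"
    using nn_integral_row[OF \<nu> s, where c=0] by simp
  have "(\<integral>\<^sup>+l. ennreal (sem_joint_density (Suc n) Y s \<nu> l) \<partial>?M (lower_idx (Suc n)))
      = (\<integral>\<^sup>+x. \<integral>\<^sup>+y. ennreal (sem_joint_density (Suc n) Y s \<nu> (merge (lower_idx n) (row_idx n n) (x, y)))
            \<partial>?M (row_idx n n) \<partial>?M (lower_idx n))"
    unfolding lower_idx_Suc
    by (rule product_sigma_finite.product_nn_integral_fold[OF product_sigma_finite_lborel
          lower_idx_row_idx_disjoint finite_lower_idx finite_row_idx
          borel_measurable_ennreal_compose[OF borel_measurable_sem_joint_density]])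
      (simp add: lower_idx_Suc)
  also have "\<dots> = (\<integral>\<^sup>+x. ennreal (sem_joint_density n Y s \<nu> x) * (\<integral>\<^sup>+y. ennreal (?G y) \<partial>?M (row_idx n n))
                    \<partial>?M (lower_idx n))"
  proof (rule nn_integral_cong)
    fix x
    have "(\<lambda>y. ennreal (?G y)) \<in> borel_measurable (?M (row_idx n n))"
      by (auto intro!: borel_measurable_density_rules)
    then show "(\<integral>\<^sup>+y. ennreal (sem_joint_density (Suc n) Y s \<nu> (merge (lower_idx n) (row_idx n n) (x, y)))
          \<partial>?M (row_idx n n))
        = ennreal (sem_joint_density n Y s \<nu> x) * (\<integral>\<^sup>+y. ennreal (?G y) \<partial>?M (row_idx n n))"
      unfolding sem_joint_density_Suc_merge ennreal_mult'[OF sem_joint_density_nonneg]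
      by (rule nn_integral_cmult)
  qed
  also have "\<dots> = (\<integral>\<^sup>+x. ennreal (sem_joint_density n Y s \<nu> x) \<partial>?M (lower_idx n)) * ennreal ?R"
    unfolding G by (rule nn_integral_multc[OF borel_measurable_ennreal_compose[OF borel_measurable_sem_joint_density]]) simp
  also have "\<dots> = ennreal (\<Prod>k<Suc n. normal_density 0 (sqrt ((s k)\<^sup>2 + \<nu>\<^sup>2 * (\<Sum>m<k. (Y m)\<^sup>2))) (Y k))"
    unfolding Suc.IH by (simp add: ennreal_mult'[symmetric] prod_nonneg)
  finally show ?case .
qed

lemma Dmat_perm_mat_index:
  assumes \<pi>: "\<pi> permutes {..<d}" and X: "X \<in> carrier_vec d" and j: "j < d"
  shows "Dmat d (perm_mat d \<pi>) X $$ (j,j) = (\<Sum>m<inv \<pi> j. (X $ \<pi> m)\<^sup>2)"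
proof -
  have "Gmat d = lower_mat d (\<lambda>_. 1)"
    by (simp add: Gmat_def lower_mat_def)
  then have "Dmat d (perm_mat d \<pi>) X $$ (j,j)
      = (perm_mat d \<pi> * lower_mat d (\<lambda>_. 1) * transpose_mat (perm_mat d \<pi>) *\<^sub>v vec d (\<lambda>k. (X $ k)\<^sup>2)) $ j"
    using j by (simp add: Dmat_def)
  also have "\<dots> = (\<Sum>m<inv \<pi> j. (X $ \<pi> m)\<^sup>2)"
    using permutes_inv_lessThan[OF \<pi> j] permutes_in_image[OF \<pi>]
    by (simp add: conj_lower_mat_mult_vec_index[OF \<pi> _ j])
  finally show ?thesis .
qed

lemma Dmat_perm_mat_nonneg:
  "\<pi> permutes {..<d} \<Longrightarrow> X \<in> carrier_vec d \<Longrightarrow> j < d \<Longrightarrow> Dmat d (perm_mat d \<pi>) X $$ (j,j) \<ge> 0"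
  by (simp add: Dmat_perm_mat_index sum_nonneg)

lemma marg_lik_diagm_perm_mat:
  assumes \<pi>: "\<pi> permutes {..<d}" and \<sigma>: "\<forall>j<d. \<sigma> j > 0" and \<nu>: "\<nu> > 0"
    and X: "X \<in> carrier_vec d"
  shows "marg_lik d (diagm d (\<lambda>j. (\<sigma> j)\<^sup>2)) \<nu> (perm_mat d \<pi>) X
       = (\<Prod>j<d. normal_density 0 (sqrt ((\<sigma> j)\<^sup>2 + \<nu>\<^sup>2 * Dmat d (perm_mat d \<pi>) X $$ (j,j))) (X $ j))"
proof -
  define Y where "Y m = X $ \<pi> m" for m
  \<comment> \<open>padded outside \<open>{..<d}\<close> since \<open>nn_integral_sem_joint_density\<close> asks for \<open>s k > 0\<close> at every \<open>k\<close>\<close>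
  define s where "s k = (if k < d then \<sigma> (\<pi> k) else 1)" for k
  have \<pi>_less: "\<pi> k < d" if "k < d" for k
    using permutes_in_image[OF \<pi>] that by simp
  have inv_\<pi>: "inv \<pi> (\<pi> k) = k" for k
    using permutes_inverses(2)[OF \<pi>] by simp
  have bij: "bij_betw \<pi> {..<d} {..<d}"
    by (rule permutes_imp_bij[OF \<pi>])
  have s: "s k > 0" for k
    using \<sigma> \<pi>_less by (simp add: s_def)
  have integrand: "gauss_density d (minv (Theta d (diagm d (\<lambda>j. (\<sigma> j)\<^sup>2)) (perm_mat d \<pi>) l)) X
      * (\<Prod>p\<in>lower_idx d. normal_density 0 \<nu> (l p)) = sem_joint_density d Y s \<nu> l" for l
  proof -
    have "gauss_density d (minv (Theta d (diagm d (\<lambda>j. (\<sigma> j)\<^sup>2)) (perm_mat d \<pi>) l)) X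
        = (\<Prod>k<d. normal_density (\<Sum>m<inv \<pi> (\<pi> k). l (inv \<pi> (\<pi> k), m) * X $ \<pi> m) (\<sigma> (\<pi> k)) (X $ \<pi> k))"
      unfolding gauss_density_Theta_diagm_perm_mat[OF \<pi> \<sigma> X]
      by (rule prod.reindex_bij_betw[OF bij, symmetric])
    also have "\<dots> = (\<Prod>k<d. normal_density (\<Sum>m<k. l (k,m) * Y m) (s k) (Y k))"
      by (simp add: inv_\<pi> s_def Y_def)
    finally show ?thesis
      by (simp add: sem_joint_density_def)
  qed
  have "marg_lik d (diagm d (\<lambda>j. (\<sigma> j)\<^sup>2)) \<nu> (perm_mat d \<pi>) X
      = enn2real (\<integral>\<^sup>+l. ennreal (sem_joint_density d Y s \<nu> l) \<partial>PiM (lower_idx d) (\<lambda>_. lborel))"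
    unfolding marg_lik_def integrand
    by (rule integral_eq_nn_integral)
      (auto intro: sem_joint_density_nonneg borel_measurable_sem_joint_density)
  also have "\<dots> = (\<Prod>k<d. normal_density 0 (sqrt ((s k)\<^sup>2 + \<nu>\<^sup>2 * (\<Sum>m<k. (Y m)\<^sup>2))) (Y k))"
    by (simp add: nn_integral_sem_joint_density[OF \<nu> s] prod_nonneg)
  also have "\<dots> = (\<Prod>k<d. normal_density 0 (sqrt ((\<sigma> (\<pi> k))\<^sup>2 + \<nu>\<^sup>2 * Dmat d (perm_mat d \<pi>) X $$ (\<pi> k, \<pi> k)))
                        (X $ \<pi> k))"
    by (intro prod.cong refl) (simp add: Dmat_perm_mat_index[OF \<pi> X \<pi>_less] inv_\<pi> s_def Y_def)
  also have "\<dots> = (\<Prod>j<d. normal_density 0 (sqrt ((\<sigma> j)\<^sup>2 + \<nu>\<^sup>2 * Dmat d (perm_mat d \<pi>) X $$ (j,j))) (X $ j))"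
    by (rule prod.reindex_bij_betw[OF bij])
  finally show ?thesis .
qed

lemma ln_normal_density_centered:
  assumes "T > 0"
  shows "ln (normal_density 0 (sqrt T) x) = - x\<^sup>2 / (2 * T) - (ln (2 * pi) + ln T) / 2"
proof -
  have "normal_density 0 (sqrt T) x = exp (- x\<^sup>2 / (2 * T)) / sqrt (2 * pi * T)"
    using assms by (simp add: normal_density_def)
  then have "ln (normal_density 0 (sqrt T) x) = - x\<^sup>2 / (2 * T) - ln (sqrt (2 * pi * T))"
    using assms by (simp add: ln_div)
  also have "ln (sqrt (2 * pi * T)) = (ln (2 * pi) + ln T) / 2"
    using assms ln_mult[of "2 * pi" T] by (simp add: ln_sqrt)
  finally show ?thesis .
qed

lemma ln_prod_normal_density_centered:
  assumes "\<forall>j<d. T j > 0"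
  shows "ln (\<Prod>j<d. normal_density 0 (sqrt (T j)) (x j))
       = - (real d / 2) * ln (2 * pi) - (\<Sum>j<d. ln (T j)) / 2 - (\<Sum>j<d. (x j)\<^sup>2 / T j) / 2"
proof -
  have "ln (\<Prod>j<d. normal_density 0 (sqrt (T j)) (x j)) = (\<Sum>j<d. ln (normal_density 0 (sqrt (T j)) (x j)))"
    using assms by (intro ln_prod) (auto intro!: normal_density_pos[THEN less_imp_neq, symmetric])
  also have "\<dots> = (\<Sum>j<d. - (x j)\<^sup>2 / (2 * T j) - (ln (2 * pi) + ln (T j)) / 2)"
    using assms by (intro sum.cong refl ln_normal_density_centered) auto
  also have "\<dots> = - (real d / 2) * ln (2 * pi) - (\<Sum>j<d. ln (T j)) / 2 - (\<Sum>j<d. (x j)\<^sup>2 / T j) / 2"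
    by (simp add: sum_subtractf sum.distrib sum_negf sum_divide_distrib[symmetric] field_simps)
  finally show ?thesis .
qed

lemma prod_insert_index:
  assumes "i < d"
  shows "(\<Prod>j<d - 1. f (insert_index i j)) = (\<Prod>j\<in>{..<d} - {i}. f j)"
proof -
  have "insert_index i ` {..<d - 1} = {..<d} - {i}"
    using insert_index_image[of i "d - 1"] assms by (simp add: atLeast0LessThan)
  then show ?thesis
    using prod.reindex[OF insert_index_inj_on[of i "{..<d - 1}"], of f] by simp
qed

lemma diagm_minus_minv_diagm_sq:
  assumes "\<forall>j<d. \<sigma> j \<noteq> 0" and "\<forall>j<d. (\<sigma> j)\<^sup>2 + \<nu>\<^sup>2 * D j \<noteq> 0"
  shows "diagm d (\<lambda>j. \<nu>\<^sup>2 * D j / ((\<sigma> j)\<^sup>2 * ((\<sigma> j)\<^sup>2 + \<nu>\<^sup>2 * D j))) - minv (diagm d (\<lambda>j. (\<sigma> j)\<^sup>2))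
       = diagm d (\<lambda>j. - 1 / ((\<sigma> j)\<^sup>2 + \<nu>\<^sup>2 * D j))"
proof -
  have entry: "\<nu>\<^sup>2 * D j / ((\<sigma> j)\<^sup>2 * ((\<sigma> j)\<^sup>2 + \<nu>\<^sup>2 * D j)) - 1 / (\<sigma> j)\<^sup>2
      = - 1 / ((\<sigma> j)\<^sup>2 + \<nu>\<^sup>2 * D j)" if "j < d" for j
  proof -
    define t where "t = (\<sigma> j)\<^sup>2 + \<nu>\<^sup>2 * D j"
    have "t \<noteq> 0" and "\<sigma> j \<noteq> 0"
      using assms that by (simp_all add: t_def)
    then have "(t - (\<sigma> j)\<^sup>2) / ((\<sigma> j)\<^sup>2 * t) - 1 / (\<sigma> j)\<^sup>2 = - 1 / t"
      by (simp add: field_simps)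
    moreover have "\<nu>\<^sup>2 * D j = t - (\<sigma> j)\<^sup>2"
      by (simp add: t_def)
    ultimately show ?thesis
      unfolding t_def[symmetric] by simp
  qed
  have inv: "minv (diagm d (\<lambda>j. (\<sigma> j)\<^sup>2)) = diagm d (\<lambda>j. 1 / (\<sigma> j)\<^sup>2)"
    using assms(1) by (simp add: minv_diagm)
  show ?thesis
    unfolding inv diagm_minus_diagm by (intro diagm_cong entry)
qed

lemma ln_det_mat_delete_diagm:
  fixes \<sigma> D :: "nat \<Rightarrow> real"
  assumes i: "i < d" and \<sigma>: "\<forall>j<d. \<sigma> j > 0" and \<nu>: "\<nu> > 0" and D: "\<forall>j<d. j \<noteq> i \<longrightarrow> D j > 0"
  shows "ln (det (mat_delete (diagm d D) i i))
         + ln (det (minv (mat_delete (diagm d (\<lambda>j. (\<sigma> j)\<^sup>2)) i i) + (1 / \<nu>\<^sup>2) \<cdot>\<^sub>m minv (mat_delete (diagm d D) i i)))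
       = (\<Sum>j\<in>{..<d} - {i}. ln ((\<sigma> j)\<^sup>2 + \<nu>\<^sup>2 * D j)) - 2 * (\<Sum>j\<in>{..<d} - {i}. ln (\<sigma> j))
         - 2 * ((real d - 1) * ln \<nu>)"
proof -
  let ?A = "{..<d} - {i}"
  have pos: "\<sigma> j > 0" "D j > 0" if "j \<in> ?A" for j
    using that \<sigma> D by auto
  have "insert_index i j \<in> ?A" if "j < d - 1" for j
    using that i by (auto simp: insert_index_def)
  then have minv_delete: "minv (mat_delete (diagm d f) i i) = diagm (d - 1) (\<lambda>j. 1 / f (insert_index i j))"
    if "\<forall>j\<in>?A. f j \<noteq> 0" for f
    using that unfolding mat_delete_diagm[OF i] by (subst minv_diagm) auto
  have det_D: "det (mat_delete (diagm d D) i i) = (\<Prod>j\<in>?A. D j)"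
    unfolding mat_delete_diagm[OF i] det_diagm o_def by (rule prod_insert_index[OF i])
  define c where "c j = 1 / (\<sigma> j)\<^sup>2 + 1 / \<nu>\<^sup>2 * (1 / D j)" for j
  have c_pos: "c j > 0" if "j \<in> ?A" for j
    using pos[OF that] \<nu> by (simp add: c_def add_pos_pos)
  have det_c: "det (minv (mat_delete (diagm d (\<lambda>j. (\<sigma> j)\<^sup>2)) i i) + (1 / \<nu>\<^sup>2) \<cdot>\<^sub>m minv (mat_delete (diagm d D) i i))
      = (\<Prod>j\<in>?A. c j)"
    using minv_delete[of "\<lambda>j. (\<sigma> j)\<^sup>2"] minv_delete[of D] pos prod_insert_index[OF i, of c]
    by (simp add: c_def diagm_add_smult_diagm det_diagm less_imp_neq[symmetric])
  have "ln (\<Prod>j\<in>?A. D j) = (\<Sum>j\<in>?A. ln (D j))" and "ln (\<Prod>j\<in>?A. c j) = (\<Sum>j\<in>?A. ln (c j))"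
    using pos c_pos by (auto intro!: ln_prod simp: less_imp_neq[symmetric])
  moreover have "ln (D j) + ln (c j) = ln ((\<sigma> j)\<^sup>2 + \<nu>\<^sup>2 * D j) - 2 * ln (\<sigma> j) - 2 * ln \<nu>"
    if "j \<in> ?A" for j
  proof -
    have "ln (D j) + ln (c j) = ln (D j * c j)"
      using pos[OF that] c_pos[OF that] by (simp add: ln_mult)
    also have "D j * c j = ((\<sigma> j)\<^sup>2 + \<nu>\<^sup>2 * D j) / ((\<sigma> j)\<^sup>2 * \<nu>\<^sup>2)"
      using pos[OF that] \<nu> by (simp add: c_def field_simps)
    also have "ln \<dots> = ln ((\<sigma> j)\<^sup>2 + \<nu>\<^sup>2 * D j) - 2 * ln (\<sigma> j) - 2 * ln \<nu>"
      using pos[OF that] \<nu> by (simp add: ln_div ln_mult ln_realpow add_pos_pos less_imp_neq[symmetric])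
    finally show ?thesis .
  qed
  moreover have "real (card ?A) = real d - 1"
    using i by simp
  ultimately show ?thesis
    unfolding det_D det_c by (simp add: sum.distrib[symmetric] sum_subtractf sum_distrib_left)
qed

theorem theorem1:
  fixes d :: nat and \<sigma> :: "nat \<Rightarrow> real" and \<nu> :: real
    and P :: "real mat" and X :: "real vec" and i :: nat
  defines "Sig \<equiv> diagm d (\<lambda>j. (\<sigma> j)\<^sup>2)"
      and "D \<equiv> Dmat d P X"
      and "S \<equiv> diagm d (\<lambda>j. \<nu>\<^sup>2 * Dmat d P X $$ (j,j) / ((\<sigma> j)\<^sup>2 * ((\<sigma> j)\<^sup>2 + \<nu>\<^sup>2 * Dmat d P X $$ (j,j))))"
  assumes "d \<ge> 2"
      and "\<forall>j<d. \<sigma> j > 0"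
      and "\<nu> > 0"
      and "is_perm_mat d P"
      and "X \<in> carrier_vec d"
      and "i < d" and "D $$ (i,i) = 0"
      and "\<forall>j<d. j \<noteq> i \<longrightarrow> D $$ (j,j) \<noteq> 0"
  shows "ln (marg_lik d Sig \<nu> P X) =
           - (real d / 2) * ln (2 * pi) - (\<Sum>j<d. ln (\<sigma> j))
           - (real d - 1) * ln \<nu>
           + (1 / 2) * (X \<bullet> ((S - minv Sig) *\<^sub>v X))
           - (1 / 2) * ln (det (mat_delete D i i))
           - (1 / 2) * ln (det (minv (mat_delete Sig i i)
                                + (1 / \<nu>\<^sup>2) \<cdot>\<^sub>m minv (mat_delete D i i)))"
proof -
  note \<sigma> = assms(5) and \<nu> = assms(6) and X = assms(8) and i = assms(9)
  obtain \<pi> where \<pi>: "\<pi> permutes {..<d}" and P: "P = perm_mat d \<pi>"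
    using assms(7) unfolding is_perm_mat_def perm_mat_def by blast
  define Dd where "Dd j = D $$ (j,j)" for j
  define T where "T j = (\<sigma> j)\<^sup>2 + \<nu>\<^sup>2 * Dd j" for j
  have D_diagm: "D = diagm d Dd"
    by (rule eq_matI) (auto simp: D_def Dd_def Dmat_def)
  have Dd_pos: "\<forall>j<d. j \<noteq> i \<longrightarrow> Dd j > 0"
    using assms(11) Dmat_perm_mat_nonneg[OF \<pi> X] by (auto simp: Dd_def D_def P order_le_neq_trans)
  have T_pos: "\<forall>j<d. T j > 0"
    using \<sigma> Dmat_perm_mat_nonneg[OF \<pi> X] by (auto simp: T_def Dd_def D_def P intro!: add_pos_nonneg)
  have "ln (marg_lik d Sig \<nu> P X) = - (real d / 2) * ln (2 * pi) - (\<Sum>j<d. ln (T j)) / 2 - (\<Sum>j<d. (X $ j)\<^sup>2 / T j) / 2"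
    using marg_lik_diagm_perm_mat[OF \<pi> \<sigma> \<nu> X] ln_prod_normal_density_centered[OF T_pos]
    by (simp add: Sig_def P T_def Dd_def D_def)
  moreover have "S - minv Sig = diagm d (\<lambda>j. - 1 / T j)"
    unfolding S_def Sig_def T_def Dd_def D_def
    using \<sigma> T_pos by (intro diagm_minus_minv_diagm_sq) (auto simp: T_def Dd_def D_def)
  then have "X \<bullet> ((S - minv Sig) *\<^sub>v X) = - (\<Sum>j<d. (X $ j)\<^sup>2 / T j)"
    by (simp add: scalar_prod_diagm_mult_vec[OF X] sum_negf)
  moreover have "(\<Sum>j<d. ln (T j)) = 2 * ln (\<sigma> i) + (\<Sum>j\<in>{..<d} - {i}. ln (T j))"
    using i assms(10) by (simp add: sum.remove T_def Dd_def ln_realpow)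
  moreover have "(\<Sum>j<d. ln (\<sigma> j)) = ln (\<sigma> i) + (\<Sum>j\<in>{..<d} - {i}. ln (\<sigma> j))"
    using i by (simp add: sum.remove)
  moreover have "ln (det (mat_delete D i i)) + ln (det (minv (mat_delete Sig i i) + (1 / \<nu>\<^sup>2) \<cdot>\<^sub>m minv (mat_delete D i i)))
      = (\<Sum>j\<in>{..<d} - {i}. ln (T j)) - 2 * (\<Sum>j\<in>{..<d} - {i}. ln (\<sigma> j)) - 2 * ((real d - 1) * ln \<nu>)"
    unfolding D_diagm Sig_def T_def by (rule ln_det_mat_delete_diagm[OF i \<sigma> \<nu> Dd_pos])
  ultimately show ?thesis
    by linarith
qed

end
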